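(* Consider the oceanic model with threshold $h$ under the Shapley scheme. Let $\Pi$ be a partition of all players into winning pools such that every atomic player $i$ is in a pool whose other members are non-atomic players of total mass $k_i$ with $0<k_i\le h$ and $a_i+k_i\ge h$, and all remaining non-atomic players are in pools containing no atomic player, each of total mass exactly $l$, where $l\ge h$ (there being at least one such pool). Then $\Pi$ is a Nash equilibrium if and only if for all distinct atomic players $i,j$: \[\frac{h-a_i}{k_i^2}=\frac{1}{l},\qquad \frac{k_i+a_i-h}{k_i}\ge\frac{a_i}{l},\qquad \frac{k_i+a_i-h}{k_i}\ge\frac{(h-a_j)^2-(\max(0,h-a_i-a_j))^2+(\max(0,a_i-h+k_j))^2}{2k_j^2}.\]
   Context: Oceanic model: there is a finite set $N_a=\{1,\dots,n\}$ of atomic players, player $i$ having stake $a_i>0$, and a continuum $N_s$ of non-atomic players of total mass $L\ge 0$ (a measurable set of non-atomic players contributes stake equal to its Lebesgue measure). A threshold $h>0$ is fixed and $a_i<h$ for every atomic player. Each player either opens her own pool or joins one; pools partition all players. For a pool $S$ let $m(S)$ be the non-atomic mass in $S$ plus the atomic stakes in $S$; its reward is $\rho(S)=1$ if $m(S)\ge h$ (winning) and $0$ otherwise. A partition $\Pi$ into winning pools is a Nash equilibrium if no atomic player can strictly increase her payment by moving to another pool of $\Pi$ or opening a new pool alone, and no non-atomic player can strictly increase her reward per unit of stake by moving to another pool of $\Pi$ (a non-atomic player is infinitesimal, so her move does not change the per-unit reward of the pool she joins). Shapley scheme (oceanic): in a pool $S$ with non-atomic mass $k>0$ and atomic members with stakes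 $b_1,\dots,b_t$, let $L_1,\dots,L_t$ be i.i.d. uniform on $[0,k]$ and $P(i)=\{j\ne i: L_j<L_i\}$; atomic member $i$ receives $\Pr\big[\sum_{j\in P(i)}b_j+L_i<h\le\sum_{j\in P(i)}b_j+L_i+b_i\big]$, and the remaining reward is shared equally per unit of stake among the non-atomic members. *)

theory Defs
  imports "HOL-Probability.Probability"
begin

text \<open>A pool is described by its set of atomic members T and the non-atomic mass k in it
  (non-atomic players are identical and infinitesimal, so this determines everything).\<close>

definition pool_mass :: "(nat \<Rightarrow> real) \<Rightarrow> nat set \<Rightarrow> real \<Rightarrow> real" where
  "pool_mass a T k = k + (\<Sum>j\<in>T. a j)"

definition pool_reward :: "real \<Rightarrow> (nat \<Rightarrow> real) \<Rightarrow> nat set \<Rightarrow> real \<Rightarrow> real" where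
  "pool_reward h a T k = (if pool_mass a T k \<ge> h then 1 else 0)"

definition shapley_atomic :: "real \<Rightarrow> (nat \<Rightarrow> real) \<Rightarrow> nat set \<Rightarrow> real \<Rightarrow> nat \<Rightarrow> real" where
  "shapley_atomic h b T k i =
     (let M = PiM T (\<lambda>_. uniform_measure lborel {0..k}) in
      measure M {L \<in> space M.
         (\<Sum>j\<in>{j\<in>T. j \<noteq> i \<and> L j < L i}. b j) + L i < h \<and>
         h \<le> (\<Sum>j\<in>{j\<in>T. j \<noteq> i \<and> L j < L i}. b j) + L i + b i})"

text \<open>For k > 0 this is the Shapley scheme;
  a pool with no non-atomic mass consisting of i alone gives i its whole reward.
  (Pools without non-atomic mass and with several atomic members are not covered by
  the scheme; they never occur in this development, and are assigned 0.)\<close>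

definition atomic_pay :: "real \<Rightarrow> (nat \<Rightarrow> real) \<Rightarrow> nat set \<Rightarrow> real \<Rightarrow> nat \<Rightarrow> real" where
  "atomic_pay h a T k i =
     (if k > 0 then shapley_atomic h a T k i
      else if T = {i} then pool_reward h a T k else 0)"

definition nonatomic_rate :: "real \<Rightarrow> (nat \<Rightarrow> real) \<Rightarrow> nat set \<Rightarrow> real \<Rightarrow> real" where
  "nonatomic_rate h a T k = (pool_reward h a T k - (\<Sum>i\<in>T. atomic_pay h a T k i)) / k"

text \<open>Nash equilibrium: all pools winning; no atomic player strictly
  gains by joining another pool of the partition or opening a pool alone; no non-atomic
  player strictly gains (per unit of stake) by joining another pool (the rate of the
  target pool being unchanged by her infinitesimal move).\<close>

definition is_NE :: "real \<Rightarrow> (nat \<Rightarrow> real) \<Rightarrow> 'q set \<Rightarrow> ('q \<Rightarrow> nat set) \<Rightarrow> ('q \<Rightarrow> real) \<Rightarrow> bool" where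
  "is_NE h a Q mem mass \<longleftrightarrow>
     (\<forall>q\<in>Q. pool_reward h a (mem q) (mass q) = 1) \<and>
     (\<forall>q\<in>Q. \<forall>i\<in>mem q.
        (\<forall>q'\<in>Q. q' \<noteq> q \<longrightarrow>
           \<not> (atomic_pay h a (insert i (mem q')) (mass q') i > atomic_pay h a (mem q) (mass q) i)) \<and>
        \<not> (atomic_pay h a {i} 0 i > atomic_pay h a (mem q) (mass q) i)) \<and>
     (\<forall>q\<in>Q. mass q > 0 \<longrightarrow> (\<forall>q'\<in>Q. q' \<noteq> q \<longrightarrow> mass q' > 0 \<longrightarrow>
        \<not> (nonatomic_rate h a (mem q') (mass q') > nonatomic_rate h a (mem q) (mass q))))"

end

theory Submission
  imports Defs
begin

text \<open>
  Every atomic player i sits alone with non-atomic mass k_i, so all payments are explicit.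
  Alone in a pool of non-atomic mass k, player i is pivotal iff its arrival time lies in
  [h - a_i, h), which has probability (min h k - h + a_i) / k; hence i earns
  (k_i + a_i - h) / k_i at home and a_i / l in a purely non-atomic pool, and the non-atomic
  rates are (h - a_i) / k_i^2 and 1 / l. In the pool of j, player i arriving at time x is
  pivotal for x in [h - a_i - a_j, h - a_j) if j came earlier (probability x / k_j) and for
  x in [h - a_i, h) otherwise; integrating over x gives the third expression.
  Since some pool is purely non-atomic, non-atomic stability means that all rates equal 1 / l,
  and atomic stability compares the home payment with the deviations, opening a pool alone
  being worthless because a_i < h.
\<close>

abbreviation unif :: "real \<Rightarrow> real measure" where
  "unif k \<equiv> uniform_measure lborel {0..k}"

lemma prob_space_unif: "0 < k \<Longrightarrow> prob_space (unif k)"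
  by (intro prob_space_uniform_measure) auto

lemma measure_unif_Ico:
  assumes "0 < k" "0 \<le> c" "c \<le> d" "c \<le> k"
  shows "measure (unif k) {c..<d} = (min d k - c) / k"
proof -
  have "{0..k} \<inter> {c..<d} = (if d \<le> k then {c..<d} else {c..k})"
    using assms by auto
  then show ?thesis
    using assms by (simp add: min_def)
qed

lemma measure_unif_if_less:
  assumes "0 < k" "0 \<le> x" "x \<le> k"
  shows "measure (unif k) {y. if y < x then A else B} =
    ((if A then x else 0) + (if B then k - x else 0)) / k"
proof -
  have "{0..k} \<inter> {y. if y < x then A else B} =
      (if A then if B then {0..k} else {0..<x} else if B then {x..k} else {})"
    using assms by auto
  then show ?thesis
    using assms by simp
qed

lemma measure_unif_pair:
  fixes f :: "real \<Rightarrow> real"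
  assumes k: "0 < k" and E: "E \<in> sets (borel \<Otimes>\<^sub>M borel)"
    and slice: "\<And>x. x \<in> {0..k} \<Longrightarrow> measure (unif k) (Pair x -` E) = f x / k"
    and f: "(f has_integral I) {0..k}"
  shows "measure (unif k \<Otimes>\<^sub>M unif k) E = I / k\<^sup>2"
proof -
  interpret prob_space "unif k"
    using k by (rule prob_space_unif)
  have E': "E \<in> sets (unif k \<Otimes>\<^sub>M unif k)"
    using E by (simp cong: sets_pair_measure_cong)
  have f_nonneg: "0 \<le> f x" if "x \<in> {0..k}" for x
    using slice[OF that] k by (metis measure_nonneg zero_le_divide_iff not_less)
  have I_nonneg: "0 \<le> I"
    using f f_nonneg by (rule has_integral_nonneg)
  have "emeasure (unif k \<Otimes>\<^sub>M unif k) E = (\<integral>\<^sup>+x. emeasure (unif k) (Pair x -` E) \<partial>unif k)"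
    using E' by (rule emeasure_pair_measure_alt)
  also have "\<dots> = (\<integral>\<^sup>+x. emeasure (unif k) (Pair x -` E) * indicator {0..k} x \<partial>lborel) / k"
    using measurable_emeasure_Pair[OF E'] k
    by (subst nn_integral_uniform_measure) (auto cong: measurable_cong_sets)
  also have "(\<integral>\<^sup>+x. emeasure (unif k) (Pair x -` E) * indicator {0..k} x \<partial>lborel) =
      (\<integral>\<^sup>+x. ennreal (f x / k) * indicator {0..k} x \<partial>lborel)"
    by (intro nn_integral_cong) (auto simp: emeasure_eq_measure slice split: split_indicator)
  also have "\<dots> = ennreal (I / k)"
    using f_nonneg k has_integral_divide[OF f, of k]
    by (intro nn_integral_has_integral_lebesgue') auto
  finally have "emeasure (unif k \<Otimes>\<^sub>M unif k) E = ennreal (I / k\<^sup>2)"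
    using k I_nonneg by (simp add: divide_ennreal power2_eq_square)
  then show ?thesis
    using k I_nonneg by (simp add: measure_def)
qed

lemma has_integral_restrict_Ico:
  fixes f :: "real \<Rightarrow> real"
  assumes "0 \<le> c" "c \<le> d" "d \<le> k" and f: "(f has_integral I) {c..d}"
  shows "((\<lambda>x. if c \<le> x \<and> x < d then f x else 0) has_integral I) {0..k}"
proof -
  have restricted: "((\<lambda>x. if x \<in> {c..d} then f x else 0) has_integral I) {0..k}"
    using assms has_integral_restrict_closed_subinterval[of f I c d 0 k] by auto
  show ?thesis
    by (rule has_integral_spike_finite[of "{d}", OF _ _ restricted]) auto
qed

lemma has_integral_upper_minus_ident:
  fixes c k :: real
  assumes "c \<le> k"
  shows "((\<lambda>x. k - x) has_integral (k - c)\<^sup>2 / 2) {c..k}"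
proof -
  have "((\<lambda>x. k - x) has_integral ((k - c) * k - (k\<^sup>2 - c\<^sup>2) / 2)) {c..k}"
    using assms has_integral_const_real[of k c k] by (intro has_integral_diff ident_has_integral) auto
  moreover have "(k - c) * k - (k\<^sup>2 - c\<^sup>2) / 2 = (k - c)\<^sup>2 / 2"
    by (simp add: power2_eq_square field_simps)
  ultimately show ?thesis by simp
qed

lemma shapley_atomic_singleton:
  assumes "0 < k"
  shows "shapley_atomic h b {i} k i = measure (unif k) {h - b i..<h}"
proof -
  let ?M = "PiM {i} (\<lambda>_. unif k)"
  have "measure (unif k) {h - b i..<h} = measure (distr ?M (unif k) (\<lambda>L. L i)) {h - b i..<h}"
    using distr_PiM_component[of "{i}" "\<lambda>_. unif k" i] prob_space_unif[OF assms] by simp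
  also have "\<dots> = measure ?M {L \<in> space ?M. L i < h \<and> h \<le> L i + b i}"
    by (subst measure_distr) (auto intro!: arg_cong[where f = "measure ?M"])
  moreover have "{j \<in> {i}. j \<noteq> i \<and> L j < L i} = {}" for L :: "nat \<Rightarrow> real"
    by auto
  ultimately show ?thesis
    unfolding shapley_atomic_def Let_def by (simp only: sum.empty) simp
qed

lemma shapley_atomic_singleton_eq:
  assumes "0 < k" "0 \<le> b i" "b i \<le> h" "h - b i \<le> k"
  shows "shapley_atomic h b {i} k i = (min h k - (h - b i)) / k"
  unfolding shapley_atomic_singleton[OF \<open>0 < k\<close>] using assms by (intro measure_unif_Ico) auto

lemma distr_PiM_pair:
  assumes M: "sigma_finite_measure M" and "i \<noteq> j"
  shows "distr (PiM {i, j} (\<lambda>_. M)) (M \<Otimes>\<^sub>M M) (\<lambda>L. (L i, L j)) = M \<Otimes>\<^sub>M M"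
proof (rule pair_measure_eqI[OF M M, symmetric])
  interpret product_sigma_finite "\<lambda>_. M"
    using M by (simp add: product_sigma_finite_def)
  fix A B assume A: "A \<in> sets M" and B: "B \<in> sets M"
  have "(\<lambda>L. (L i, L j)) -` (A \<times> B) \<inter> space (PiM {i, j} (\<lambda>_. M)) =
      PiE {i, j} (\<lambda>t. if t = i then A else B)"
    using \<open>i \<noteq> j\<close> sets.sets_into_space[OF A] sets.sets_into_space[OF B]
    by (auto simp: space_PiM PiE_iff)
  moreover have "emeasure (PiM {i, j} (\<lambda>_. M)) (PiE {i, j} (\<lambda>t. if t = i then A else B)) =
      emeasure M A * emeasure M B"
    using A B \<open>i \<noteq> j\<close> by (subst emeasure_PiM) auto
  ultimately show "emeasure M A * emeasure M B =
      emeasure (distr (PiM {i, j} (\<lambda>_. M)) (M \<Otimes>\<^sub>M M) (\<lambda>L. (L i, L j))) (A \<times> B)"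
    using A B by (subst emeasure_distr) auto
qed simp

text \<open>Arrival times x of i and y of j for which i is pivotal in the pool {i, j}.\<close>

definition pivotal_arrivals :: "real \<Rightarrow> real \<Rightarrow> real \<Rightarrow> (real \<times> real) set" where
  "pivotal_arrivals h bi bj =
    {(x, y). (if y < x then bj else 0) + x < h \<and> h \<le> (if y < x then bj else 0) + x + bi}"

lemma pivotal_arrivals_sets: "pivotal_arrivals h bi bj \<in> sets (borel \<Otimes>\<^sub>M borel)"
proof -
  have "{p \<in> space (borel \<Otimes>\<^sub>M borel). (if snd p < fst p then bj else 0) + fst p < h \<and>
      h \<le> (if snd p < fst p then bj else 0) + fst p + bi} \<in> sets (borel \<Otimes>\<^sub>M borel)"
    by measurable
  then show ?thesis
    by (simp add: pivotal_arrivals_def space_pair_measure case_prod_unfold)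
qed

lemma Pair_vimage_pivotal_arrivals:
  "Pair x -` pivotal_arrivals h bi bj =
    {y. if y < x then h - bi - bj \<le> x \<and> x < h - bj else h - bi \<le> x \<and> x < h}"
  by (auto simp: pivotal_arrivals_def)

lemma shapley_atomic_pair:
  assumes k: "0 < k" and "i \<noteq> j"
  shows "shapley_atomic h b {i, j} k i =
    measure (unif k \<Otimes>\<^sub>M unif k) (pivotal_arrivals h (b i) (b j))"
    (is "_ = measure ?P ?E")
proof -
  let ?M = "PiM {i, j} (\<lambda>_. unif k)"
  have E: "?E \<in> sets ?P"
    using pivotal_arrivals_sets by (simp cong: sets_pair_measure_cong)
  have "measure ?P ?E = measure (distr ?M ?P (\<lambda>L. (L i, L j))) ?E"
    using distr_PiM_pair[of "unif k" i j] prob_space_unif[OF k] \<open>i \<noteq> j\<close>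
    by (simp add: prob_space_imp_sigma_finite)
  also have "\<dots> = measure ?M ((\<lambda>L. (L i, L j)) -` ?E \<inter> space ?M)"
    using E by (intro measure_distr) auto
  moreover have "{j' \<in> {i, j}. j' \<noteq> i \<and> L j' < L i} = (if L j < L i then {j} else {})"
    for L :: "nat \<Rightarrow> real"
    using \<open>i \<noteq> j\<close> by auto
  ultimately show ?thesis
    unfolding shapley_atomic_def Let_def pivotal_arrivals_def
    by (auto intro!: arg_cong[where f = "measure ?M"])
qed

lemma shapley_atomic_pair_eq:
  assumes k: "0 < k" "k \<le> h" and bi: "0 \<le> b i" "b i \<le> h"
    and bj: "0 \<le> h - b j" "h - b j \<le> k" and "i \<noteq> j"
  shows "shapley_atomic h b {i, j} k i =
    ((h - b j)\<^sup>2 - (max 0 (h - b i - b j))\<^sup>2 + (max 0 (b i - h + k))\<^sup>2) / (2 * k\<^sup>2)"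
proof -
  \<comment> \<open>j precedes i, arriving at x, with probability x / k\<close>
  define f where "f x = (if h - b i - b j \<le> x \<and> x < h - b j then x else 0) +
    (if h - b i \<le> x \<and> x < h then k - x else 0)" for x
  have early: "((\<lambda>x. if max 0 (h - b i - b j) \<le> x \<and> x < h - b j then x else 0)
      has_integral ((h - b j)\<^sup>2 - (max 0 (h - b i - b j))\<^sup>2) / 2) {0..k}"
    using bi bj by (intro has_integral_restrict_Ico ident_has_integral) auto
  have late: "((\<lambda>x. if min k (h - b i) \<le> x \<and> x < k then k - x else 0)
      has_integral (max 0 (b i - h + k))\<^sup>2 / 2) {0..k}"
  proof -
    have "(k - min k (h - b i))\<^sup>2 = (max 0 (b i - h + k))\<^sup>2"
      by (simp add: min_def max_def)
    then show ?thesis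
      using k bi has_integral_upper_minus_ident[of "min k (h - b i)" k]
      by (intro has_integral_restrict_Ico) auto
  qed
  have "(f has_integral
      ((h - b j)\<^sup>2 - (max 0 (h - b i - b j))\<^sup>2) / 2 + (max 0 (b i - h + k))\<^sup>2 / 2) {0..k}"
    by (rule has_integral_spike_finite[of "{k}", OF _ _ has_integral_add[OF early late]])
      (use k in \<open>auto simp: f_def\<close>)
  moreover have "measure (unif k) (Pair x -` pivotal_arrivals h (b i) (b j)) = f x / k"
    if "x \<in> {0..k}" for x
    using that k unfolding Pair_vimage_pivotal_arrivals
    by (simp add: measure_unif_if_less f_def del: measure_uniform_measure)
  ultimately show ?thesis
    unfolding shapley_atomic_pair[OF k(1) \<open>i \<noteq> j\<close>] using k pivotal_arrivals_sets
    by (subst measure_unif_pair) (auto simp: field_simps power2_eq_square)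
qed

lemma atomic_pay_solo_losing: "b i < h \<Longrightarrow> atomic_pay h b {i} 0 i = 0"
  by (simp add: atomic_pay_def pool_reward_def pool_mass_def)

lemma nonatomic_rate_singleton:
  assumes "0 < k" "k \<le> h" "0 \<le> b i" "b i \<le> h" "h \<le> b i + k"
  shows "nonatomic_rate h b {i} k = (h - b i) / k\<^sup>2"
proof -
  have "atomic_pay h b {i} k i = (k - (h - b i)) / k"
    using assms by (simp add: atomic_pay_def shapley_atomic_singleton_eq min_absorb2)
  moreover have "pool_reward h b {i} k = 1"
    using assms by (simp add: pool_reward_def pool_mass_def add.commute)
  ultimately have "nonatomic_rate h b {i} k = (1 - (k - (h - b i)) / k) / k"
    by (simp add: nonatomic_rate_def)
  then show ?thesis
    using assms by (simp add: field_simps power2_eq_square)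
qed

lemma nonatomic_rate_no_atomic: "h \<le> l \<Longrightarrow> nonatomic_rate h b {} l = 1 / l"
  by (simp add: nonatomic_rate_def pool_reward_def pool_mass_def)

locale singleton_pools =
  fixes h l :: real and n :: nat and a k :: "nat \<Rightarrow> real"
    and Q :: "'q set" and mem :: "'q \<Rightarrow> nat set" and mass :: "'q \<Rightarrow> real"
    and p :: "nat \<Rightarrow> 'q"
  assumes h_pos: "h > 0"
    and a_pos: "\<And>i. i \<in> {1..n} \<Longrightarrow> a i > 0"
    and a_lt: "\<And>i. i \<in> {1..n} \<Longrightarrow> a i < h"
    and p_in: "\<And>i. i \<in> {1..n} \<Longrightarrow> p i \<in> Q"
    and p_mem: "\<And>i. i \<in> {1..n} \<Longrightarrow> mem (p i) = {i}"
    and p_mass: "\<And>i. i \<in> {1..n} \<Longrightarrow> mass (p i) = k i"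
    and k_pos: "\<And>i. i \<in> {1..n} \<Longrightarrow> 0 < k i \<and> k i \<le> h"
    and k_win: "\<And>i. i \<in> {1..n} \<Longrightarrow> a i + k i \<ge> h"
    and rest: "\<And>q. q \<in> Q \<Longrightarrow> q \<notin> p ` {1..n} \<Longrightarrow> mem q = {} \<and> mass q = l"
    and rest_ex: "\<exists>q\<in>Q. q \<notin> p ` {1..n}"
    and l_ge: "l \<ge> h"
begin

lemma l_pos: "0 < l"
  using h_pos l_ge by simp

lemma pool_cases:
  assumes "q \<in> Q"
  obtains (atomic) i where "i \<in> {1..n}" "q = p i"
  | (nonatomic) "mem q = {}" "mass q = l"
  using rest[OF assms] by blast

lemma nonatomic_pool_ex:
  obtains q0 where "q0 \<in> Q" "q0 \<notin> p ` {1..n}" "mem q0 = {}" "mass q0 = l"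
  using rest_ex rest by blast

lemma pay_own_pool:
  assumes i: "i \<in> {1..n}"
  shows "atomic_pay h a (mem (p i)) (mass (p i)) i = (k i + a i - h) / k i"
proof -
  have "shapley_atomic h a {i} (k i) i = (min h (k i) - (h - a i)) / k i"
    using k_pos[OF i] k_win[OF i] a_pos[OF i] a_lt[OF i] by (intro shapley_atomic_singleton_eq) auto
  then show ?thesis
    using k_pos[OF i] by (simp add: p_mem[OF i] p_mass[OF i] atomic_pay_def min_absorb2)
qed

lemma pay_join_nonatomic_pool:
  assumes i: "i \<in> {1..n}"
  shows "atomic_pay h a {i} l i = a i / l"
proof -
  have "shapley_atomic h a {i} l i = (min h l - (h - a i)) / l"
    using l_pos l_ge a_pos[OF i] a_lt[OF i] by (intro shapley_atomic_singleton_eq) auto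
  then show ?thesis
    using l_pos l_ge by (simp add: atomic_pay_def min_absorb1)
qed

lemma pay_join_atomic_pool:
  assumes "i \<in> {1..n}" "j \<in> {1..n}" "i \<noteq> j"
  shows "atomic_pay h a (insert i (mem (p j))) (mass (p j)) i =
    ((h - a j)\<^sup>2 - (max 0 (h - a i - a j))\<^sup>2 + (max 0 (a i - h + k j))\<^sup>2) / (2 * (k j)\<^sup>2)"
proof -
  have "insert i (mem (p j)) = {i, j}"
    using assms(2) by (simp add: p_mem)
  moreover have "shapley_atomic h a {i, j} (k j) i =
      ((h - a j)\<^sup>2 - (max 0 (h - a i - a j))\<^sup>2 + (max 0 (a i - h + k j))\<^sup>2) / (2 * (k j)\<^sup>2)"
    using assms k_pos[OF assms(2)] k_win[OF assms(2)] a_pos a_lt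
    by (intro shapley_atomic_pair_eq) (auto simp: less_imp_le)
  ultimately show ?thesis
    using k_pos[OF assms(2)] by (simp add: p_mass[OF assms(2)] atomic_pay_def)
qed

lemma rate_atomic_pool:
  assumes i: "i \<in> {1..n}"
  shows "nonatomic_rate h a (mem (p i)) (mass (p i)) = (h - a i) / (k i)\<^sup>2"
  using k_pos[OF i] k_win[OF i] a_pos[OF i] a_lt[OF i]
  by (simp add: p_mem[OF i] p_mass[OF i] nonatomic_rate_singleton add.commute)

lemma pools_winning:
  assumes "q \<in> Q"
  shows "pool_reward h a (mem q) (mass q) = 1"
  using assms
proof (cases rule: pool_cases)
  case (atomic i)
  then show ?thesis
    using k_win[of i] by (simp add: pool_reward_def pool_mass_def p_mem p_mass add.commute)
qed (use l_ge in \<open>simp add: pool_reward_def pool_mass_def\<close>)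

lemma nonatomic_stable_iff:
  "(\<forall>q\<in>Q. mass q > 0 \<longrightarrow> (\<forall>q'\<in>Q. q' \<noteq> q \<longrightarrow> mass q' > 0 \<longrightarrow>
      \<not> nonatomic_rate h a (mem q') (mass q') > nonatomic_rate h a (mem q) (mass q)))
   \<longleftrightarrow> (\<forall>i\<in>{1..n}. (h - a i) / (k i)\<^sup>2 = 1 / l)"
  (is "?stable \<longleftrightarrow> ?balanced")
proof
  assume stable: ?stable
  obtain q0 where q0: "q0 \<in> Q" "q0 \<notin> p ` {1..n}" "mem q0 = {}" "mass q0 = l"
    by (rule nonatomic_pool_ex)
  show ?balanced
  proof
    fix i assume i: "i \<in> {1..n}"
    have "mass q0 > 0" "mass (p i) > 0"
      using q0 l_pos k_pos[OF i] p_mass[OF i] by auto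
    then have "\<not> nonatomic_rate h a (mem q0) (mass q0) > nonatomic_rate h a (mem (p i)) (mass (p i))"
      "\<not> nonatomic_rate h a (mem (p i)) (mass (p i)) > nonatomic_rate h a (mem q0) (mass q0)"
      using stable q0(1,2) i p_in[OF i] by (metis imageI, metis imageI)
    then show "(h - a i) / (k i)\<^sup>2 = 1 / l"
      using q0 l_ge by (simp add: rate_atomic_pool[OF i] nonatomic_rate_no_atomic)
  qed
next
  assume balanced: ?balanced
  have "nonatomic_rate h a (mem q) (mass q) = 1 / l" if "q \<in> Q" for q
    using that
  proof (cases rule: pool_cases)
    case (atomic i)
    then show ?thesis using balanced by (simp add: rate_atomic_pool)
  qed (use l_ge in \<open>simp add: nonatomic_rate_no_atomic\<close>)
  then show ?stable
    by simp
qed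

lemma forall_members_iff: "(\<forall>q\<in>Q. \<forall>i\<in>mem q. P q i) \<longleftrightarrow> (\<forall>i\<in>{1..n}. P (p i) i)"
proof -
  have "i = j" if "q \<in> Q" "i \<in> mem q" "j \<in> {1..n}" "q = p j" for q i j
    using that p_mem by auto
  then show ?thesis
    using p_in p_mem by (metis pool_cases empty_iff singletonI)
qed

lemma atomic_deviations_iff:
  assumes i: "i \<in> {1..n}"
  shows "(\<forall>q'\<in>Q. q' \<noteq> p i \<longrightarrow>
      \<not> atomic_pay h a (insert i (mem q')) (mass q') i > atomic_pay h a (mem (p i)) (mass (p i)) i)
    \<longleftrightarrow> a i / l \<le> (k i + a i - h) / k i \<and>
      (\<forall>j\<in>{1..n}. i \<noteq> j \<longrightarrow>
        ((h - a j)\<^sup>2 - (max 0 (h - a i - a j))\<^sup>2 + (max 0 (a i - h + k j))\<^sup>2) / (2 * (k j)\<^sup>2)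
          \<le> (k i + a i - h) / k i)"
  (is "?stable \<longleftrightarrow> ?open \<and> ?atomic")
proof
  assume stable: ?stable
  obtain q0 where q0: "q0 \<in> Q" "q0 \<notin> p ` {1..n}" "mem q0 = {}" "mass q0 = l"
    by (rule nonatomic_pool_ex)
  then have "q0 \<noteq> p i"
    using i by blast
  then have "\<not> atomic_pay h a {i} l i > atomic_pay h a (mem (p i)) (mass (p i)) i"
    using stable q0 by fastforce
  then have ?open
    using i by (simp add: pay_own_pool pay_join_nonatomic_pool)
  moreover have ?atomic
  proof (intro ballI impI)
    fix j assume j: "j \<in> {1..n}" and "i \<noteq> j"
    then have "p j \<noteq> p i"
      using i p_mem by (metis singleton_inject)
    then show "((h - a j)\<^sup>2 - (max 0 (h - a i - a j))\<^sup>2 + (max 0 (a i - h + k j))\<^sup>2)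
        / (2 * (k j)\<^sup>2) \<le> (k i + a i - h) / k i"
      using stable p_in[OF j] i j \<open>i \<noteq> j\<close> by (force simp: pay_own_pool pay_join_atomic_pool)
  qed
  ultimately show "?open \<and> ?atomic" ..
next
  assume bounds: "?open \<and> ?atomic"
  show ?stable
  proof (intro ballI impI)
    fix q' assume "q' \<in> Q" "q' \<noteq> p i"
    then show "\<not> atomic_pay h a (insert i (mem q')) (mass q') i > atomic_pay h a (mem (p i)) (mass (p i)) i"
    proof (cases rule: pool_cases)
      case (atomic j)
      then have "i \<noteq> j"
        using \<open>q' \<noteq> p i\<close> by blast
      then have "((h - a j)\<^sup>2 - (max 0 (h - a i - a j))\<^sup>2 + (max 0 (a i - h + k j))\<^sup>2)
          / (2 * (k j)\<^sup>2) \<le> (k i + a i - h) / k i"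
        using bounds atomic(1) by blast
      then show ?thesis
        using i atomic \<open>i \<noteq> j\<close> by (simp add: pay_own_pool pay_join_atomic_pool)
    qed (use bounds i in \<open>simp add: pay_own_pool pay_join_nonatomic_pool\<close>)
  qed
qed

lemma atomic_stable_iff:
  "(\<forall>q\<in>Q. \<forall>i\<in>mem q.
      (\<forall>q'\<in>Q. q' \<noteq> q \<longrightarrow>
        \<not> atomic_pay h a (insert i (mem q')) (mass q') i > atomic_pay h a (mem q) (mass q) i) \<and>
      \<not> atomic_pay h a {i} 0 i > atomic_pay h a (mem q) (mass q) i)
   \<longleftrightarrow> (\<forall>i\<in>{1..n}. a i / l \<le> (k i + a i - h) / k i) \<and>
      (\<forall>i\<in>{1..n}. \<forall>j\<in>{1..n}. i \<noteq> j \<longrightarrow>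
        ((h - a j)\<^sup>2 - (max 0 (h - a i - a j))\<^sup>2 + (max 0 (a i - h + k j))\<^sup>2) / (2 * (k j)\<^sup>2)
          \<le> (k i + a i - h) / k i)"
proof -
  have "\<not> atomic_pay h a {i} 0 i > atomic_pay h a (mem (p i)) (mass (p i)) i" if i: "i \<in> {1..n}" for i
  proof -
    have "0 \<le> (k i + a i - h) / k i"
      using k_pos[OF i] k_win[OF i] by simp
    then show ?thesis
      using a_lt[OF i] by (simp add: pay_own_pool[OF i] atomic_pay_solo_losing)
  qed
  then show ?thesis
    unfolding forall_members_iff using atomic_deviations_iff by auto
qed

end

theorem lemma3p5:
  fixes h l :: real and n :: nat and a k :: "nat \<Rightarrow> real"
    and Q :: "'q set" and mem :: "'q \<Rightarrow> nat set" and mass :: "'q \<Rightarrow> real"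
    and p :: "nat \<Rightarrow> 'q"
  assumes h_pos: "h > 0"
    and a_pos: "\<And>i. i \<in> {1..n} \<Longrightarrow> a i > 0"
    and a_lt: "\<And>i. i \<in> {1..n} \<Longrightarrow> a i < h"
    and Q_fin: "finite Q"
    and p_in: "\<And>i. i \<in> {1..n} \<Longrightarrow> p i \<in> Q"
    and p_mem: "\<And>i. i \<in> {1..n} \<Longrightarrow> mem (p i) = {i}"
    and p_mass: "\<And>i. i \<in> {1..n} \<Longrightarrow> mass (p i) = k i"
    and k_pos: "\<And>i. i \<in> {1..n} \<Longrightarrow> 0 < k i \<and> k i \<le> h"
    and k_win: "\<And>i. i \<in> {1..n} \<Longrightarrow> a i + k i \<ge> h"
    and rest: "\<And>q. q \<in> Q \<Longrightarrow> q \<notin> p ` {1..n} \<Longrightarrow> mem q = {} \<and> mass q = l"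
    and rest_ex: "\<exists>q\<in>Q. q \<notin> p ` {1..n}"
    and l_ge: "l \<ge> h"
  shows "is_NE h a Q mem mass \<longleftrightarrow>
    (\<forall>i\<in>{1..n}.
        (h - a i) / (k i)\<^sup>2 = 1 / l \<and>
        (k i + a i - h) / k i \<ge> a i / l) \<and>
    (\<forall>i\<in>{1..n}. \<forall>j\<in>{1..n}. i \<noteq> j \<longrightarrow>
        (k i + a i - h) / k i \<ge>
          ((h - a j)\<^sup>2 - (max 0 (h - a i - a j))\<^sup>2 + (max 0 (a i - h + k j))\<^sup>2) / (2 * (k j)\<^sup>2))"
proof -
  interpret singleton_pools h l n a k Q mem mass p
    using assms by unfold_locales auto
  show ?thesis
    unfolding is_NE_def
    using pools_winning atomic_stable_iff nonatomic_stable_iff by auto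
qed

end
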